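(* Let $n\ge 6$ with $n=3k$ for an integer $k$. Then $2k<\beta(H(n+1))<\beta(H(n+2))\le 2(k+1)$.
   Context: For $n\ge 5$, $H(n)$ is the graph with vertex set $V_1\cup V_2$, where $V_1=\{v_1,\dots,v_n\}$ and $V_2=\{v_iv_j: 1\le i<j\le n\}$ (each $v_iv_j$ a single vertex), and where $v_r\in V_1$ is adjacent to $v_iv_j\in V_2$ iff $r=i$ or $r=j$; there are no other edges. $d(u,v)$ is the shortest-path distance. A set $Q$ of vertices is a resolving set of a graph $G$ if any two distinct vertices $x,y$ satisfy $(d(x,q))_{q\in Q}\neq(d(y,q))_{q\in Q}$; $\beta(G)$ (the metric dimension) is the minimum size of a resolving set of $G$. *)

theory Defs
  imports Main
begin

definition is_walk :: "('a \<Rightarrow> 'a \<Rightarrow> bool) \<Rightarrow> 'a set \<Rightarrow> 'a list \<Rightarrow> bool" where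
  "is_walk E V xs \<longleftrightarrow> xs \<noteq> [] \<and> set xs \<subseteq> V \<and>
     (\<forall>i. Suc i < length xs \<longrightarrow> E (xs ! i) (xs ! Suc i))"

definition gdist :: "'a set \<Rightarrow> ('a \<Rightarrow> 'a \<Rightarrow> bool) \<Rightarrow> 'a \<Rightarrow> 'a \<Rightarrow> nat" where
  "gdist V E x y = (LEAST k. \<exists>xs. is_walk E V xs \<and> hd xs = x \<and> last xs = y \<and> length xs = Suc k)"

definition resolving_set :: "'a set \<Rightarrow> ('a \<Rightarrow> 'a \<Rightarrow> bool) \<Rightarrow> 'a set \<Rightarrow> bool" where
  "resolving_set V E Q \<longleftrightarrow> Q \<subseteq> V \<and>
     (\<forall>x\<in>V. \<forall>y\<in>V. x \<noteq> y \<longrightarrow> (\<exists>q\<in>Q. gdist V E x q \<noteq> gdist V E y q))"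

definition metric_dim :: "'a set \<Rightarrow> ('a \<Rightarrow> 'a \<Rightarrow> bool) \<Rightarrow> nat" where
  "metric_dim V E = (LEAST k. \<exists>Q. finite Q \<and> resolving_set V E Q \<and> card Q = k)"

datatype hvert = V1 nat | V2 nat nat

definition H_V :: "nat \<Rightarrow> hvert set" where
  "H_V n = {V1 r | r. 1 \<le> r \<and> r \<le> n} \<union> {V2 i j | i j. 1 \<le> i \<and> i < j \<and> j \<le> n}"

fun H_adj0 :: "hvert \<Rightarrow> hvert \<Rightarrow> bool" where
  "H_adj0 (V1 r) (V2 i j) = (r = i \<or> r = j)"
| "H_adj0 _ _ = False"

definition H_E :: "hvert \<Rightarrow> hvert \<Rightarrow> bool" where
  "H_E x y \<longleftrightarrow> H_adj0 x y \<or> H_adj0 y x"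

definition beta_H :: "nat \<Rightarrow> nat" where
  "beta_H n = metric_dim (H_V n) H_E"

end

theory Submission
  imports Defs
begin

text \<open>Upper bound: for \<open>m = 3k < n\<close> the vertices \<open>V1 r\<close> with \<open>m < r\<close>, together with the \<open>2k\<close>
  vertices \<open>V2 a (a + 1)\<close> for the edges \<open>{a, a + 1}\<close> of the paths \<open>3t+1 - 3t+2 - 3t+3\<close>
  covering \<open>{1..m}\<close>, resolve \<open>H(n)\<close>; so \<open>\<beta>(H(n)) \<le> (n - m) + 2k\<close>.

  Lower bound: a resolving set \<open>Q\<close> consists of vertices \<open>V1 r\<close>, \<open>r \<in> Q1\<close>, and of a graph on
  \<open>{1..n}\<close> whose edges are the pairs \<open>{i, j}\<close> with \<open>V2 i j \<in> Q\<close>. Outside \<open>Q1\<close> there is at most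
  one isolated vertex and no edge joins two leaves; if there is an isolated vertex, every vertex of
  degree two lies on an edge without leaves. Counting degrees then gives \<open>2n \<le> 3 |Q|\<close> for
  \<open>n \<ge> 6\<close>. For \<open>n = 3k\<close> the two bounds force \<open>\<beta>(H(n+1)) = 2k+1\<close> and \<open>\<beta>(H(n+2)) = 2k+2\<close>.\<close>

lemma card_2_obtains_other:
  assumes "card P = 2" "x \<in> P"
  obtains y where "y \<noteq> x" "P = {x, y}"
proof -
  obtain a b where "P = {a, b}" "a \<noteq> b"
    using assms(1) by (auto simp: card_2_iff)
  with assms(2) that show thesis by (metis insert_commute insertE singletonD)
qed

lemma card_2_eq_doubleton:
  assumes "card P = 2" "x \<in> P" "y \<in> P" "x \<noteq> y"
  shows "P = {x, y}"
proof -
  have "finite P"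
    using assms(1) by (metis card.infinite zero_neq_numeral)
  then show ?thesis
    using assms by (intro card_subset_eq[symmetric]) auto
qed

lemma sum_card_incident:
  assumes "finite S" "finite F"
  shows "(\<Sum>v\<in>S. card {e\<in>F. v \<in> e}) = (\<Sum>e\<in>F. card (e \<inter> S))"
proof -
  have "(\<Sum>v\<in>S. card {e\<in>F. v \<in> e}) = (\<Sum>v\<in>S. \<Sum>e\<in>F. if v \<in> e then 1 else 0)"
    using assms(2) by (simp add: sum.inter_filter[symmetric])
  also have "\<dots> = (\<Sum>e\<in>F. \<Sum>v\<in>S. if v \<in> e then 1 else 0)"
    by (rule sum.swap)
  also have "\<dots> = (\<Sum>e\<in>F. card (e \<inter> S))"
    using assms(1) by (simp add: sum.inter_filter[symmetric] Int_def conj_commute)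
  finally show ?thesis .
qed

lemma is_walk_singleton [simp]: "is_walk E V [a] \<longleftrightarrow> a \<in> V"
  by (simp add: is_walk_def)

lemma is_walk_Cons_Cons:
  "is_walk E V (a # b # xs) \<longleftrightarrow> a \<in> V \<and> E a b \<and> is_walk E V (b # xs)"
  unfolding is_walk_def by (auto simp: less_Suc_eq_0_disj nth_Cons split: nat.splits)

lemma gdist_eqI:
  fixes h :: "'a \<Rightarrow> nat"
  assumes "x \<in> V"
    and zero_iff: "\<And>a. a \<in> V \<Longrightarrow> h a = 0 \<longleftrightarrow> a = y"
    and edge_le: "\<And>a b. a \<in> V \<Longrightarrow> b \<in> V \<Longrightarrow> E a b \<Longrightarrow> h a \<le> Suc (h b)"
    and descent: "\<And>a m. a \<in> V \<Longrightarrow> h a = Suc m \<Longrightarrow> \<exists>b\<in>V. E a b \<and> h b = m"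
  shows "gdist V E x y = h x"
proof -
  have walk_exists: "\<exists>xs. is_walk E V xs \<and> hd xs = a \<and> last xs = y \<and> length xs = Suc m"
    if "a \<in> V" "h a = m" for a m
    using that
  proof (induction m arbitrary: a)
    case 0
    then show ?case using zero_iff by (intro exI[of _ "[a]"]) auto
  next
    case (Suc m)
    obtain b where b: "b \<in> V" "E a b" "h b = m" using descent Suc.prems by blast
    obtain xs where xs: "is_walk E V xs" "hd xs = b" "last xs = y" "length xs = Suc m"
      using Suc.IH[OF b(1,3)] by blast
    then obtain ys where "xs = b # ys" by (cases xs) auto
    with xs b Suc.prems show ?case
      by (intro exI[of _ "a # xs"]) (auto simp: is_walk_Cons_Cons)
  qed
  have walk_length: "h (hd xs) \<le> length xs - 1" if "is_walk E V xs" "last xs = y" for xs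
    using that
  proof (induction xs)
    case Nil
    then show ?case by (simp add: is_walk_def)
  next
    case (Cons a xs)
    show ?case
    proof (cases xs)
      case Nil
      then show ?thesis using Cons.prems zero_iff by simp
    next
      case (Cons b ys)
      with Cons.prems have "a \<in> V" "E a b" "is_walk E V xs" "b \<in> V" "last xs = y"
        by (auto simp: is_walk_Cons_Cons is_walk_def)
      with Cons.IH edge_le[of a b] \<open>xs = b # ys\<close> show ?thesis by fastforce
    qed
  qed
  show ?thesis
    unfolding gdist_def
  proof (rule Least_equality)
    show "\<exists>xs. is_walk E V xs \<and> hd xs = x \<and> last xs = y \<and> length xs = Suc (h x)"
      using walk_exists \<open>x \<in> V\<close> by blast
  next
    fix k
    assume "\<exists>xs. is_walk E V xs \<and> hd xs = x \<and> last xs = y \<and> length xs = Suc k"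
    then show "h x \<le> k" using walk_length by fastforce
  qed
qed

lemma metric_dim_le_card:
  assumes "finite Q" "resolving_set V E Q"
  shows "metric_dim V E \<le> card Q"
  unfolding metric_dim_def using assms by (intro Least_le) blast

lemma metric_dim_obtains_basis:
  assumes "finite Q" "resolving_set V E Q"
  obtains B where "finite B" "resolving_set V E B" "card B = metric_dim V E"
  using LeastI_ex[of "\<lambda>k. \<exists>Q. finite Q \<and> resolving_set V E Q \<and> card Q = k"] assms
  unfolding metric_dim_def by blast

text \<open>\<open>hdist x y\<close> is the size of the symmetric difference of the index sets (\<open>{r}\<close> for
  \<open>V1 r\<close>, \<open>{i, j}\<close> for \<open>V2 i j\<close>) of \<open>x\<close> and \<open>y\<close>.\<close>

fun hdist :: "hvert \<Rightarrow> hvert \<Rightarrow> nat" where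
  "hdist (V1 r) (V1 s) = (if r = s then 0 else 2)"
| "hdist (V1 r) (V2 i j) = (if r = i \<or> r = j then 1 else 3)"
| "hdist (V2 i j) (V1 r) = (if r = i \<or> r = j then 1 else 3)"
| "hdist (V2 i j) (V2 k l) =
    (if i = k \<and> j = l then 0 else if i = k \<or> i = l \<or> j = k \<or> j = l then 2 else 4)"

lemma V1_in_H_V [simp]: "V1 r \<in> H_V n \<longleftrightarrow> 1 \<le> r \<and> r \<le> n"
  by (auto simp: H_V_def)

lemma V2_in_H_V [simp]: "V2 i j \<in> H_V n \<longleftrightarrow> 1 \<le> i \<and> i < j \<and> j \<le> n"
  by (auto simp: H_V_def)

lemma H_E_simps [simp]:
  "H_E (V1 r) (V1 s) \<longleftrightarrow> False" "H_E (V2 i j) (V2 k l) \<longleftrightarrow> False"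
  "H_E (V1 r) (V2 i j) \<longleftrightarrow> r = i \<or> r = j" "H_E (V2 i j) (V1 r) \<longleftrightarrow> r = i \<or> r = j"
  by (auto simp: H_E_def)

lemma hdist_edge_le: "H_E a b \<Longrightarrow> hdist a y \<le> Suc (hdist b y)"
  by (cases a; cases b; cases y) auto

lemma hdist_descent:
  assumes "a \<in> H_V n" "y \<in> H_V n" "hdist a y = Suc m"
  shows "\<exists>b\<in>H_V n. H_E a b \<and> hdist b y = m"
proof (cases a)
  case (V1 r)
  show ?thesis
  proof (cases y)
    case (V1 s)
    with assms \<open>a = V1 r\<close> show ?thesis
      by (intro bexI[of _ "V2 (min r s) (max r s)"]) (auto split: if_splits)
  next
    case (V2 k l)
    show ?thesis
    proof (cases "r = k \<or> r = l")
      case True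
      with assms \<open>a = V1 r\<close> \<open>y = V2 k l\<close> show ?thesis by (intro bexI[of _ "V2 k l"]) auto
    next
      case False
      with assms \<open>a = V1 r\<close> \<open>y = V2 k l\<close> show ?thesis
        by (intro bexI[of _ "V2 (min r k) (max r k)"]) auto
    qed
  qed
next
  case (V2 i j)
  show ?thesis
  proof (cases y)
    case (V1 r)
    with assms \<open>a = V2 i j\<close> show ?thesis
      by (cases "r = i \<or> r = j") (auto intro: bexI[of _ "V1 r"] bexI[of _ "V1 i"])
  next
    case (V2 k l)
    with assms \<open>a = V2 i j\<close> show ?thesis
      by (cases "j = k \<or> j = l")
        (auto intro: bexI[of _ "V1 j"] bexI[of _ "V1 i"] split: if_splits)
  qed
qed

lemma gdist_H:
  assumes "x \<in> H_V n" "y \<in> H_V n"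
  shows "gdist (H_V n) H_E x y = hdist x y"
proof (rule gdist_eqI[OF assms(1)])
  show "hdist a y = 0 \<longleftrightarrow> a = y" for a
    by (cases a; cases y) auto
  show "hdist a y \<le> Suc (hdist b y)" if "H_E a b" for a b
    using that by (rule hdist_edge_le)
  show "\<exists>b\<in>H_V n. H_E a b \<and> hdist b y = m" if "a \<in> H_V n" "hdist a y = Suc m" for a m
    using hdist_descent that assms(2) by blast
qed

lemma resolving_set_H_iff:
  "resolving_set (H_V n) H_E Q \<longleftrightarrow> Q \<subseteq> H_V n \<and>
     (\<forall>x\<in>H_V n. \<forall>y\<in>H_V n. x \<noteq> y \<longrightarrow> (\<exists>q\<in>Q. hdist x q \<noteq> hdist y q))"
  unfolding resolving_set_def by (metis gdist_H subsetD)

lemma hdist_V2_V2: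
  "i < j \<Longrightarrow> k < l \<Longrightarrow>
    hdist (V2 i j) (V2 k l) = (if {i, j} = {k, l} then 0 else if {i, j} \<inter> {k, l} = {} then 4 else 2)"
  by (auto simp: doubleton_eq_iff)

lemma pair_vertex_exists:
  assumes "card X = 2" "X \<subseteq> {1..n}"
  obtains i j where "X = {i, j}" "V2 i j \<in> H_V n"
proof -
  obtain a b where "X = {a, b}" "a \<noteq> b"
    using assms(1) by (auto simp: card_2_iff)
  with assms(2) that[of "min a b" "max a b"] show thesis
    by (auto simp: min_def max_def insert_commute)
qed

text \<open>For \<open>3 dvd m\<close>, \<open>triple_edge m a\<close> says that \<open>{a, a + 1}\<close> is an edge of one of the paths
  \<open>3t+1 - 3t+2 - 3t+3\<close> that partition \<open>{1..m}\<close>.\<close>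

definition triple_edge :: "nat \<Rightarrow> nat \<Rightarrow> bool" where
  "triple_edge m a \<longleftrightarrow> 1 \<le> a \<and> a + 1 \<le> m \<and> a mod 3 \<noteq> 0"

definition triple_basis :: "nat \<Rightarrow> nat \<Rightarrow> hvert set" where
  "triple_basis n m = V1 ` {m<..n} \<union> (\<lambda>a. V2 a (Suc a)) ` Collect (triple_edge m)"

lemma finite_triple_edges: "finite (Collect (triple_edge m))"
  unfolding triple_edge_def by (rule finite_subset[of _ "{..m}"]) auto

lemma card_triple_edges: "card (Collect (triple_edge (3 * k))) = 2 * k"
proof (induction k)
  case 0
  then show ?case by (simp add: triple_edge_def)
next
  case (Suc k)
  have "Collect (triple_edge (3 * Suc k)) = {3 * k + 1, 3 * k + 2} \<union> Collect (triple_edge (3 * k))"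
    unfolding triple_edge_def by auto presburger+
  moreover have "{3 * k + 1, 3 * k + 2} \<inter> Collect (triple_edge (3 * k)) = {}"
    by (auto simp: triple_edge_def)
  ultimately show ?case
    using Suc.IH finite_triple_edges by (simp add: card_Un_disjoint)
qed

lemma card_triple_basis: "card (triple_basis n (3 * k)) = (n - 3 * k) + 2 * k"
proof -
  have "card (V1 ` {3 * k<..n}) = n - 3 * k"
    by (simp add: card_image inj_on_def)
  moreover have "card ((\<lambda>a. V2 a (Suc a)) ` Collect (triple_edge (3 * k))) = 2 * k"
    by (simp add: card_image inj_on_def card_triple_edges)
  ultimately show ?thesis
    unfolding triple_basis_def using finite_triple_edges by (subst card_Un_disjoint) auto
qed

lemma triple_block:
  fixes v m :: nat
  assumes "1 \<le> v" "v \<le> m" "m mod 3 = 0"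
  obtains u where "u mod 3 = 1" "u \<le> v" "v \<le> u + 2" "u + 2 \<le> m"
proof
  let ?u = "3 * ((v - 1) div 3) + 1"
  show "?u mod 3 = 1" "?u \<le> v" "v \<le> ?u + 2" "?u + 2 \<le> m"
    using assms by presburger+
qed

lemma triple_block_edges: "u mod 3 = 1 \<Longrightarrow> u + 2 \<le> m \<Longrightarrow> triple_edge m u \<and> triple_edge m (Suc u)"
  unfolding triple_edge_def by presburger

lemma triple_edges_separate_points:
  assumes "r \<noteq> s" "1 \<le> r" "r \<le> m" "m mod 3 = 0"
  shows "\<exists>a. triple_edge m a \<and> (r \<in> {a, Suc a}) \<noteq> (s \<in> {a, Suc a})"
proof -
  obtain u where u: "u mod 3 = 1" "u \<le> r" "r \<le> u + 2" "u + 2 \<le> m"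
    using triple_block assms(2-4) .
  have "\<exists>a\<in>{u, Suc u}. (r \<in> {a, Suc a}) \<noteq> (s \<in> {a, Suc a})"
    using u(2,3) assms(1) by auto
  then show ?thesis using triple_block_edges[OF u(1,4)] by blast
qed

lemma triple_edge_avoiding_block:
  assumes "1 \<le> y" "y \<le> m" "m mod 3 = 0" "u mod 3 = 1" "y \<notin> {u, u + 1, u + 2}"
  shows "\<exists>a. triple_edge m a \<and> y \<in> {a, Suc a} \<and> u \<notin> {a, Suc a} \<and> u + 2 \<notin> {a, Suc a}"
proof -
  obtain w where w: "w mod 3 = 1" "w \<le> y" "y \<le> w + 2" "w + 2 \<le> m"
    using triple_block assms(1-3) .
  have far: "w + 3 \<le> u \<or> u + 3 \<le> w"
    using w(1-3) assms(4,5) by simp presburger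
  have "\<exists>a\<in>{w, Suc w}. y \<in> {a, Suc a} \<and> u \<notin> {a, Suc a} \<and> u + 2 \<notin> {a, Suc a}"
    using w(2,3) far by auto
  then show ?thesis using triple_block_edges[OF w(1,4)] by blast
qed

text \<open>What the distances to \<open>triple_basis n m\<close> reveal about a vertex \<open>V2 i j\<close> is the pair
  \<open>P = {i, j}\<close> up to this equivalence.\<close>

definition same_triple_trace :: "nat \<Rightarrow> nat set \<Rightarrow> nat set \<Rightarrow> bool" where
  "same_triple_trace m P P' \<longleftrightarrow> (\<forall>r>m. r \<in> P \<longleftrightarrow> r \<in> P') \<and>
     (\<forall>a. triple_edge m a \<longrightarrow> (P = {a, Suc a} \<longleftrightarrow> P' = {a, Suc a}) \<and>
        (P \<inter> {a, Suc a} = {} \<longleftrightarrow> P' \<inter> {a, Suc a} = {}))"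

lemma same_triple_traceD:
  assumes "same_triple_trace m P P'"
  shows "m < r \<Longrightarrow> r \<in> P \<longleftrightarrow> r \<in> P'"
    and "triple_edge m a \<Longrightarrow> P = {a, Suc a} \<longleftrightarrow> P' = {a, Suc a}"
    and "triple_edge m a \<Longrightarrow> P \<inter> {a, Suc a} = {} \<longleftrightarrow> P' \<inter> {a, Suc a} = {}"
  using assms unfolding same_triple_trace_def by simp_all

lemma same_triple_trace_sym: "same_triple_trace m P P' \<Longrightarrow> same_triple_trace m P' P"
  unfolding same_triple_trace_def by simp

text \<open>The only pairs that meet the edges of a path \<open>u - u+1 - u+2\<close> in the same pattern are
  \<open>{u, u+2}\<close> and a pair through \<open>u+1\<close>; the second element of the latter is seen elsewhere.\<close>

lemma same_triple_trace_block_collision: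
  assumes trace: "same_triple_trace m {u, u + 2} {Suc u, y}"
    and "y \<noteq> Suc u" "1 \<le> y" "m mod 3 = 0" "u mod 3 = 1" "u + 2 \<le> m"
  shows False
proof -
  have edges: "triple_edge m u" "triple_edge m (Suc u)"
    using triple_block_edges assms(5,6) by blast+
  note outside = same_triple_traceD(1)[OF trace]
    and eq = same_triple_traceD(2)[OF trace]
    and meet = same_triple_traceD(3)[OF trace]
  have "y \<noteq> u"
  proof
    assume "y = u"
    then have "{Suc u, y} = {u, Suc u}" by auto
    then show False using eq[OF edges(1)] by (simp add: doubleton_eq_iff)
  qed
  have "y \<noteq> u + 2"
  proof
    assume "y = u + 2"
    then have "{Suc u, y} = {Suc u, Suc (Suc u)}" by auto
    then show False using eq[OF edges(2)] by (simp add: doubleton_eq_iff)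
  qed
  have "y \<le> m"
  proof (rule ccontr)
    assume "\<not> y \<le> m"
    then have "y \<in> {u, u + 2}" using outside[of y] by simp
    then show False using \<open>\<not> y \<le> m\<close> assms(6) by auto
  qed
  then obtain a where a: "triple_edge m a" "y \<in> {a, Suc a}" "u \<notin> {a, Suc a}" "u + 2 \<notin> {a, Suc a}"
    using triple_edge_avoiding_block[of y m u] assms \<open>y \<noteq> u\<close> \<open>y \<noteq> u + 2\<close> by auto
  then show False
    using meet[OF a(1)] by auto
qed

lemma same_triple_trace_block_cases:
  assumes trace: "same_triple_trace m P P'" and "card P = 2" "card P' = 2"
    and "v \<in> P" "v \<notin> P'" "u \<le> v" "v \<le> u + 2"
    and edges: "triple_edge m u" "triple_edge m (Suc u)"
  shows "(P = {u, u + 2} \<and> Suc u \<in> P') \<or> (P' = {u, u + 2} \<and> Suc u \<in> P)"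
proof -
  note eq = same_triple_traceD(2)[OF trace] and meet = same_triple_traceD(3)[OF trace]
  consider "v = u" | "v = Suc u" | "v = u + 2"
    using assms(6,7) by linarith
  then show ?thesis
  proof cases
    case 1
    with \<open>v \<in> P\<close> \<open>v \<notin> P'\<close> meet[OF edges(1)] have "Suc u \<in> P'"
      by blast
    have "Suc u \<notin> P"
    proof
      assume "Suc u \<in> P"
      with \<open>card P = 2\<close> \<open>v \<in> P\<close> 1 have "P = {u, Suc u}"
        by (simp add: card_2_eq_doubleton)
      with eq[OF edges(1)] \<open>v \<notin> P'\<close> 1 show False by simp
    qed
    with \<open>Suc u \<in> P'\<close> meet[OF edges(2)] have "u + 2 \<in> P"
      by auto
    with \<open>card P = 2\<close> \<open>v \<in> P\<close> 1 \<open>Suc u \<in> P'\<close> show ?thesis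
      by (simp add: card_2_eq_doubleton)
  next
    case 2
    with \<open>v \<in> P\<close> \<open>v \<notin> P'\<close> meet[OF edges(1)] meet[OF edges(2)] have "u \<in> P'" "u + 2 \<in> P'"
      by auto
    with \<open>card P' = 2\<close> \<open>v \<in> P\<close> 2 show ?thesis
      by (simp add: card_2_eq_doubleton)
  next
    case 3
    with \<open>v \<in> P\<close> \<open>v \<notin> P'\<close> meet[OF edges(2)] have "Suc u \<in> P'"
      by auto
    have "Suc u \<notin> P"
    proof
      assume "Suc u \<in> P"
      with \<open>card P = 2\<close> \<open>v \<in> P\<close> 3 have "P = {Suc u, Suc (Suc u)}"
        by (simp add: card_2_eq_doubleton)
      with eq[OF edges(2)] \<open>v \<notin> P'\<close> 3 show False by simp
    qed
    with \<open>Suc u \<in> P'\<close> meet[OF edges(1)] have "u \<in> P"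
      by auto
    with \<open>card P = 2\<close> \<open>v \<in> P\<close> 3 \<open>Suc u \<in> P'\<close> show ?thesis
      by (simp add: card_2_eq_doubleton)
  qed
qed

lemma same_triple_trace_subset:
  assumes trace: "same_triple_trace m P P'" and "m mod 3 = 0"
    and P: "card P = 2" "\<forall>v\<in>P. 1 \<le> v" and P': "card P' = 2" "\<forall>v\<in>P'. 1 \<le> v"
  shows "P \<subseteq> P'"
proof
  fix v
  assume "v \<in> P"
  show "v \<in> P'"
  proof (rule ccontr)
    assume "v \<notin> P'"
    have "1 \<le> v"
      using P(2) \<open>v \<in> P\<close> by blast
    moreover have "v \<le> m"
      using same_triple_traceD(1)[OF trace, of v] \<open>v \<in> P\<close> \<open>v \<notin> P'\<close> by (cases "m < v") auto
    ultimately obtain u where u: "u mod 3 = 1" "u \<le> v" "v \<le> u + 2" "u + 2 \<le> m"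
      using triple_block \<open>m mod 3 = 0\<close> by metis
    have collision: False
      if "same_triple_trace m X Y" "X = {u, u + 2}" and Y: "card Y = 2" "\<forall>v\<in>Y. 1 \<le> v" "Suc u \<in> Y"
      for X Y
    proof -
      obtain y where "y \<noteq> Suc u" "Y = {Suc u, y}"
        using card_2_obtains_other Y(1,3) .
      then show False
        using same_triple_trace_block_collision[of m u y] that Y(2) u(1,4) \<open>m mod 3 = 0\<close> by auto
    qed
    show False
      using same_triple_trace_block_cases[OF trace P(1) P'(1) \<open>v \<in> P\<close> \<open>v \<notin> P'\<close> u(2,3)]
        triple_block_edges[OF u(1,4)] collision[OF trace] P P'
        collision[OF same_triple_trace_sym[OF trace]]
      by blast
  qed
qed

lemma triple_basis_separates_V1:
  assumes "m mod 3 = 0" "V1 r \<in> H_V n" "V1 s \<in> H_V n" "r \<noteq> s"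
  shows "\<exists>q\<in>triple_basis n m. hdist (V1 r) q \<noteq> hdist (V1 s) q"
proof (cases "m < max r s")
  case True
  with assms show ?thesis
    by (intro bexI[of _ "V1 (max r s)"]) (auto simp: triple_basis_def max_def)
next
  case False
  then have "r \<le> m"
    by simp
  then obtain a where "triple_edge m a" "(r \<in> {a, Suc a}) \<noteq> (s \<in> {a, Suc a})"
    using triple_edges_separate_points[of r s m] assms by auto
  then show ?thesis
    by (intro bexI[of _ "V2 a (Suc a)"]) (auto simp: triple_basis_def)
qed

lemma triple_basis_trace:
  assumes "i < j" "j \<le> n" "k < l" "l \<le> n"
    and same: "\<And>q. q \<in> triple_basis n m \<Longrightarrow> hdist (V2 i j) q = hdist (V2 k l) q"
  shows "same_triple_trace m {i, j} {k, l}"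
  unfolding same_triple_trace_def
proof (intro conjI allI impI)
  show "r \<in> {i, j} \<longleftrightarrow> r \<in> {k, l}" if "m < r" for r
  proof (cases "r \<le> n")
    case True
    with that have "V1 r \<in> triple_basis n m"
      by (simp add: triple_basis_def)
    then have "hdist (V2 i j) (V1 r) = hdist (V2 k l) (V1 r)"
      by (rule same)
    then show ?thesis
      by (simp split: if_splits)
  next
    case False
    then show ?thesis
      using assms(1-4) by auto
  qed
  fix a
  assume "triple_edge m a"
  then have "V2 a (Suc a) \<in> triple_basis n m"
    by (simp add: triple_basis_def)
  then have d: "hdist (V2 i j) (V2 a (Suc a)) = hdist (V2 k l) (V2 a (Suc a))"
    by (rule same)
  show eq: "{i, j} = {a, Suc a} \<longleftrightarrow> {k, l} = {a, Suc a}"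
    using d unfolding hdist_V2_V2[OF assms(1) lessI] hdist_V2_V2[OF assms(3) lessI]
    by (simp split: if_splits)
  show "{i, j} \<inter> {a, Suc a} = {} \<longleftrightarrow> {k, l} \<inter> {a, Suc a} = {}"
  proof (cases "{i, j} = {a, Suc a}")
    case True
    then show ?thesis using eq by simp
  next
    case False
    then show ?thesis
      using d eq unfolding hdist_V2_V2[OF assms(1) lessI] hdist_V2_V2[OF assms(3) lessI]
      by (simp split: if_splits) blast
  qed
qed

lemma triple_basis_separates_V2:
  assumes "m mod 3 = 0" "V2 i j \<in> H_V n" "V2 k l \<in> H_V n" "V2 i j \<noteq> V2 k l"
  shows "\<exists>q\<in>triple_basis n m. hdist (V2 i j) q \<noteq> hdist (V2 k l) q"
proof (rule ccontr)
  assume "\<not> ?thesis"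
  with assms(2,3) have trace: "same_triple_trace m {i, j} {k, l}"
    by (intro triple_basis_trace) auto
  have "{i, j} \<subseteq> {k, l}" "{k, l} \<subseteq> {i, j}"
    using same_triple_trace_subset[OF trace assms(1)]
      same_triple_trace_subset[OF same_triple_trace_sym[OF trace] assms(1)] assms(2,3)
    by auto
  then have "{i, j} = {k, l}"
    by (rule subset_antisym)
  with assms(2-4) show False
    by (auto simp: doubleton_eq_iff)
qed

lemma triple_basis_resolving:
  assumes "m mod 3 = 0" "m < n"
  shows "resolving_set (H_V n) H_E (triple_basis n m)"
  unfolding resolving_set_H_iff
proof (intro conjI ballI impI)
  show "triple_basis n m \<subseteq> H_V n"
    using assms by (auto simp: triple_basis_def triple_edge_def)
next
  fix x y
  assume "x \<in> H_V n" "y \<in> H_V n" "x \<noteq> y"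
  have "V1 n \<in> triple_basis n m"
    using assms(2) by (simp add: triple_basis_def)
  show "\<exists>q\<in>triple_basis n m. hdist x q \<noteq> hdist y q"
  proof (cases x; cases y)
    fix r s
    assume "x = V1 r" "y = V1 s"
    then show ?thesis
      using triple_basis_separates_V1[OF assms(1)] \<open>x \<in> H_V n\<close> \<open>y \<in> H_V n\<close> \<open>x \<noteq> y\<close> by blast
  next
    fix i j k l
    assume "x = V2 i j" "y = V2 k l"
    then show ?thesis
      using triple_basis_separates_V2[OF assms(1)] \<open>x \<in> H_V n\<close> \<open>y \<in> H_V n\<close> \<open>x \<noteq> y\<close> by blast
  qed (use \<open>V1 n \<in> triple_basis n m\<close> in \<open>auto intro!: bexI[of _ "V1 n"] split: if_splits\<close>)
qed

lemma finite_triple_basis: "finite (triple_basis n m)"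
  unfolding triple_basis_def using finite_triple_edges by simp

lemma beta_H_le:
  assumes "3 * k < n"
  shows "beta_H n \<le> (n - 3 * k) + 2 * k"
  unfolding beta_H_def
  using metric_dim_le_card[OF finite_triple_basis triple_basis_resolving[of "3 * k" n]] assms
  by (simp add: card_triple_basis)

locale H_resolving =
  fixes n :: nat and Q :: "hvert set"
  assumes resolving: "resolving_set (H_V n) H_E Q"
begin

definition Q1 :: "nat set" where
  "Q1 = {r. V1 r \<in> Q}"

definition edges :: "nat set set" where
  "edges = {{i, j} | i j. V2 i j \<in> Q}"

definition deg :: "nat \<Rightarrow> nat" where
  "deg v = card {e\<in>edges. v \<in> e}"

definition isolated :: "nat set" where
  "isolated = {v\<in>{1..n} - Q1. deg v = 0}"

definition leaves :: "nat set" where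
  "leaves = {v\<in>{1..n} - Q1. deg v = 1}"

definition branches :: "nat set" where
  "branches = {v\<in>{1..n} - Q1. 2 \<le> deg v}"

definition inner_edges :: "nat set set" where
  "inner_edges = {e\<in>edges. e \<inter> leaves = {}}"

lemma Q_subset: "Q \<subseteq> H_V n"
  using resolving by (simp add: resolving_set_def)

lemma separates: "x \<in> H_V n \<Longrightarrow> y \<in> H_V n \<Longrightarrow> x \<noteq> y \<Longrightarrow> \<exists>q\<in>Q. hdist x q \<noteq> hdist y q"
  using resolving by (simp add: resolving_set_H_iff)

lemma Q1_subset: "Q1 \<subseteq> {1..n}"
  using Q_subset by (auto simp: Q1_def)

lemma edgesE:
  assumes "e \<in> edges"
  obtains i j where "e = {i, j}" "V2 i j \<in> Q" "1 \<le> i" "i < j" "j \<le> n"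
proof -
  obtain i j where "e = {i, j}" "V2 i j \<in> Q"
    using assms by (auto simp: edges_def)
  moreover from this(2) have "V2 i j \<in> H_V n"
    using Q_subset by blast
  ultimately show thesis
    using that by simp
qed

lemma edgeI: "V2 i j \<in> Q \<Longrightarrow> {i, j} \<in> edges"
  unfolding edges_def by blast

lemma edge_subset: "e \<in> edges \<Longrightarrow> e \<subseteq> {1..n}"
  by (erule edgesE) auto

lemma card_edge: "e \<in> edges \<Longrightarrow> card e = 2"
  by (erule edgesE) auto

lemma finite_edges: "finite edges"
proof (rule finite_subset)
  show "edges \<subseteq> Pow {1..n}"
    using edge_subset by blast
qed simp

lemma finite_vertex_classes: "finite Q1" "finite isolated" "finite leaves" "finite branches"
  using finite_subset[OF Q1_subset] by (simp_all add: isolated_def leaves_def branches_def)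

lemma card_Q: "card Q = card Q1 + card edges"
proof -
  define PQ where "PQ = {(i, j). V2 i j \<in> Q}"
  have PQ_ordered: "1 \<le> i \<and> i < j \<and> j \<le> n" if "(i, j) \<in> PQ" for i j
    using that Q_subset unfolding PQ_def by auto
  then have "PQ \<subseteq> {..n} \<times> {..n}"
    by fastforce
  then have "finite PQ"
    by (rule finite_subset) simp
  have "Q = V1 ` Q1 \<union> case_prod V2 ` PQ"
    unfolding Q1_def PQ_def by (auto intro: hvert.exhaust)
  also have "card \<dots> = card (V1 ` Q1) + card (case_prod V2 ` PQ)"
    using finite_vertex_classes(1) \<open>finite PQ\<close> by (intro card_Un_disjoint) auto
  also have "\<dots> = card Q1 + card PQ"
    by (subst card_image, simp add: inj_on_def)+ (auto simp: inj_on_def)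
  finally have "card Q = card Q1 + card PQ" .
  moreover have "edges = (\<lambda>(i, j). {i, j}) ` PQ"
    unfolding edges_def PQ_def by auto
  moreover have "inj_on (\<lambda>(i, j). {i, j}) PQ"
  proof (rule inj_onI, clarify)
    fix i j k l
    assume "(i, j) \<in> PQ" "(k, l) \<in> PQ" "{i, j} = {k, l}"
    then show "i = k \<and> j = l"
      using PQ_ordered[of i j] PQ_ordered[of k l] by (auto simp: doubleton_eq_iff)
  qed
  ultimately show ?thesis
    by (simp add: card_image)
qed

lemma V1_separated:
  assumes "a \<in> {1..n} - Q1" "b \<in> {1..n} - Q1" "a \<noteq> b"
  shows "\<exists>e\<in>edges. (a \<in> e) \<noteq> (b \<in> e)"
proof -
  have "V1 a \<in> H_V n" "V1 b \<in> H_V n" "V1 a \<noteq> V1 b"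
    using assms by auto
  then obtain q where q: "q \<in> Q" "hdist (V1 a) q \<noteq> hdist (V1 b) q"
    using separates by blast
  show ?thesis
  proof (cases q)
    case (V1 t)
    with q(1) have "t \<in> Q1"
      by (simp add: Q1_def)
    with assms have "hdist (V1 a) (V1 t) = hdist (V1 b) (V1 t)"
      by auto
    with q(2) V1 show ?thesis by simp
  next
    case (V2 i j)
    with q(2) have "(a \<in> {i, j}) \<noteq> (b \<in> {i, j})"
      by (auto split: if_splits)
    moreover have "{i, j} \<in> edges"
      using q(1) V2 by (simp add: edgeI)
    ultimately show ?thesis by (rule bexI)
  qed
qed

lemma V2_separated:
  assumes X: "card X = 2" "X \<subseteq> {1..n} - Q1" and Y: "card Y = 2" "Y \<subseteq> {1..n} - Q1"
    and "X \<noteq> Y"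
  shows "\<exists>e\<in>edges. (X = e) \<noteq> (Y = e) \<or> (X \<inter> e = {}) \<noteq> (Y \<inter> e = {})"
proof -
  obtain i j where ij: "X = {i, j}" "V2 i j \<in> H_V n"
    using pair_vertex_exists X by blast
  obtain k l where kl: "Y = {k, l}" "V2 k l \<in> H_V n"
    using pair_vertex_exists Y by blast
  obtain q where q: "q \<in> Q" "hdist (V2 i j) q \<noteq> hdist (V2 k l) q"
    using separates[OF ij(2) kl(2)] ij(1) kl(1) \<open>X \<noteq> Y\<close> by auto
  show ?thesis
  proof (cases q)
    case (V1 t)
    with q(1) have "t \<in> Q1" by (simp add: Q1_def)
    with V1 X(2) Y(2) ij(1) kl(1) have "hdist (V2 i j) q = hdist (V2 k l) q" by auto
    with q(2) show ?thesis by contradiction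
  next
    case (V2 i' j')
    with q(1) Q_subset have "{i', j'} \<in> edges" "i' < j'"
      by (auto intro: edgeI)
    have "i < j" "k < l"
      using ij(2) kl(2) by auto
    have "(if X = {i', j'} then 0 else if X \<inter> {i', j'} = {} then 4 else 2) \<noteq>
        (if Y = {i', j'} then 0 else if Y \<inter> {i', j'} = {} then 4 else (2::nat))"
      using q(2)
      unfolding V2 ij(1) kl(1) hdist_V2_V2[OF \<open>i < j\<close> \<open>i' < j'\<close>] hdist_V2_V2[OF \<open>k < l\<close> \<open>i' < j'\<close>] .
    then have "(X = {i', j'}) \<noteq> (Y = {i', j'}) \<or> (X \<inter> {i', j'} = {}) \<noteq> (Y \<inter> {i', j'} = {})"
      by argo
    then show ?thesis using \<open>{i', j'} \<in> edges\<close> by (rule bexI)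
  qed
qed

lemma deg_eq_0_iff: "deg v = 0 \<longleftrightarrow> (\<forall>e\<in>edges. v \<notin> e)"
  using finite_edges by (auto simp: deg_def)

lemma card_isolated_le_1: "card isolated \<le> 1"
proof -
  have "a = b" if "a \<in> isolated" "b \<in> isolated" for a b
    using V1_separated[of a b] that by (auto simp: isolated_def deg_eq_0_iff)
  then show ?thesis
    using finite_vertex_classes(2) by (simp add: card_le_Suc0_iff_eq)
qed

lemma leaf_edge_unique:
  assumes "v \<in> leaves" "e \<in> edges" "f \<in> edges" "v \<in> e" "v \<in> f"
  shows "e = f"
proof -
  have "card {e\<in>edges. v \<in> e} \<le> 1"
    using assms(1) by (simp add: leaves_def deg_def)
  then show ?thesis
    using assms(2-5) finite_edges by (auto simp: card_le_Suc0_iff_eq)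
qed

lemma no_edge_between_leaves:
  assumes "e \<in> edges" "a \<in> e" "b \<in> e" "a \<noteq> b" "a \<in> leaves" "b \<in> leaves"
  shows False
proof -
  obtain f where "f \<in> edges" "(a \<in> f) \<noteq> (b \<in> f)"
    using V1_separated[of a b] assms(4-6) by (auto simp: leaves_def)
  with assms leaf_edge_unique show False by blast
qed

lemma card_leaves_in_edge: "e \<in> edges \<Longrightarrow> card (e \<inter> leaves) \<le> 1"
  using no_edge_between_leaves finite_vertex_classes(3) by (auto simp: card_le_Suc0_iff_eq)

lemma leaf_neighbours:
  assumes "b \<in> branches" "deg b = 2" "\<not> (\<exists>e\<in>inner_edges. b \<in> e)"
  obtains a c where "a \<noteq> c" "a \<noteq> b" "c \<noteq> b" "a \<in> leaves" "c \<in> leaves"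
    "{f\<in>edges. b \<in> f} = {{b, a}, {b, c}}"
proof -
  obtain e1 e2 where E: "{f\<in>edges. b \<in> f} = {e1, e2}" "e1 \<noteq> e2"
    using assms(2) by (auto simp: deg_def card_2_iff)
  then have e: "e1 \<in> edges" "b \<in> e1" "e2 \<in> edges" "b \<in> e2"
    by blast+
  obtain a where a: "a \<noteq> b" "e1 = {b, a}"
    using card_2_obtains_other card_edge e(1,2) by metis
  obtain c where c: "c \<noteq> b" "e2 = {b, c}"
    using card_2_obtains_other card_edge e(3,4) by metis
  have "b \<notin> leaves"
    using assms(2) by (simp add: leaves_def)
  have "e1 \<notin> inner_edges" "e2 \<notin> inner_edges"
    using assms(3) e(2,4) by blast+
  then have "e1 \<inter> leaves \<noteq> {}" "e2 \<inter> leaves \<noteq> {}"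
    using e(1,3) by (simp_all add: inner_edges_def)
  with a c \<open>b \<notin> leaves\<close> have "a \<in> leaves" "c \<in> leaves"
    by auto
  moreover have "a \<noteq> c"
    using E(2) a c by auto
  ultimately show thesis
    using that a c E(1) by blast
qed

text \<open>If both neighbours \<open>a, c\<close> of a degree-two vertex \<open>b\<close> were leaves, nothing in \<open>Q\<close> would
  separate \<open>V2\<close>-vertices \<open>{a, c}\<close> and \<open>{b, z}\<close> for an isolated \<open>z\<close>.\<close>

lemma degree_two_branch_on_inner_edge:
  assumes "isolated \<noteq> {}" "b \<in> branches" "deg b = 2"
  shows "\<exists>e\<in>inner_edges. b \<in> e"
proof (rule ccontr)
  assume "\<not> ?thesis"
  then obtain a c where ac: "a \<noteq> c" "a \<noteq> b" "c \<noteq> b" "a \<in> leaves" "c \<in> leaves"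
    and E: "{f\<in>edges. b \<in> f} = {{b, a}, {b, c}}"
    using leaf_neighbours assms(2,3) by blast
  obtain z where z: "z \<in> isolated"
    using assms(1) by blast
  have "b \<noteq> z"
    using assms(3) z by (auto simp: isolated_def)
  have z_free: "z \<notin> f" if "f \<in> edges" for f
    using z that by (auto simp: isolated_def deg_eq_0_iff)
  have b_edge: "f = {b, a} \<or> f = {b, c}" if "f \<in> edges" "b \<in> f" for f
    using E that by blast
  have "{b, a} \<in> edges" "{b, c} \<in> edges"
    using E by blast+
  have a_edge: "f = {b, a}" if "f \<in> edges" "a \<in> f" for f
    using leaf_edge_unique[OF ac(4) that(1) \<open>{b, a} \<in> edges\<close> that(2)] by simp
  have c_edge: "f = {b, c}" if "f \<in> edges" "c \<in> f" for f
    using leaf_edge_unique[OF ac(5) that(1) \<open>{b, c} \<in> edges\<close> that(2)] by simp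
  have "{a, c} \<subseteq> {1..n} - Q1" "{b, z} \<subseteq> {1..n} - Q1"
    using ac(4,5) assms(2) z by (auto simp: leaves_def branches_def isolated_def)
  moreover have "{a, c} \<noteq> {b, z}"
    using ac(2,3) by auto
  ultimately obtain f where f: "f \<in> edges"
    "({a, c} = f) \<noteq> ({b, z} = f) \<or> ({a, c} \<inter> f = {}) \<noteq> ({b, z} \<inter> f = {})"
    using V2_separated[of "{a, c}" "{b, z}"] ac(1) \<open>b \<noteq> z\<close> by auto
  have "{a, c} \<noteq> f"
    using a_edge[OF f(1)] ac(1-3) by (auto simp: doubleton_eq_iff)
  moreover have "{b, z} \<noteq> f"
    using z_free[OF f(1)] by auto
  moreover have "{a, c} \<inter> f = {} \<longleftrightarrow> {b, z} \<inter> f = {}"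
    using a_edge[OF f(1)] c_edge[OF f(1)] b_edge[OF f(1)] z_free[OF f(1)] by auto
  ultimately show False
    using f(2) by blast
qed

lemma vertex_partition: "{1..n} = Q1 \<union> (isolated \<union> (leaves \<union> branches))"
  using Q1_subset by (auto simp: isolated_def leaves_def branches_def)

lemma vertex_classes_disjoint:
  "Q1 \<inter> (isolated \<union> (leaves \<union> branches)) = {}"
  "isolated \<inter> (leaves \<union> branches) = {}"
  "leaves \<inter> branches = {}"
  by (auto simp: isolated_def leaves_def branches_def)

lemma card_partition: "n = card Q1 + card isolated + card leaves + card branches"
proof -
  have "n = card (Q1 \<union> (isolated \<union> (leaves \<union> branches)))"
    by (simp flip: vertex_partition)
  also have "\<dots> = card Q1 + (card isolated + (card leaves + card branches))"
    using finite_vertex_classes vertex_classes_disjoint by (simp add: card_Un_disjoint)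
  finally show ?thesis by simp
qed

lemma degree_sum:
  "2 * card edges = (\<Sum>v\<in>Q1. deg v) + card leaves + (\<Sum>v\<in>branches. deg v - 2) + 2 * card branches"
proof -
  have "2 * card edges = (\<Sum>e\<in>edges. card (e \<inter> {1..n}))"
    using edge_subset card_edge by (simp add: Int_absorb2)
  also have "\<dots> = (\<Sum>v\<in>{1..n}. deg v)"
    unfolding deg_def using finite_edges by (simp add: sum_card_incident)
  also have "\<dots> = (\<Sum>v\<in>Q1. deg v) + ((\<Sum>v\<in>isolated. deg v) + ((\<Sum>v\<in>leaves. deg v) + (\<Sum>v\<in>branches. deg v)))"
    unfolding vertex_partition
    using finite_vertex_classes vertex_classes_disjoint by (simp add: sum.union_disjoint)
  also have "(\<Sum>v\<in>branches. deg v) = (\<Sum>v\<in>branches. (deg v - 2) + 2)"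
    by (rule sum.cong) (auto simp: branches_def)
  also have "\<dots> = (\<Sum>v\<in>branches. deg v - 2) + 2 * card branches"
    by (simp only: sum.distrib sum_constant of_nat_id mult.commute)
  finally show ?thesis
    by (simp add: isolated_def leaves_def)
qed

lemma card_edges_split: "card edges = card leaves + card inner_edges"
proof -
  have "card leaves = (\<Sum>v\<in>leaves. deg v)"
    by (simp add: leaves_def)
  also have "\<dots> = (\<Sum>e\<in>edges. card (e \<inter> leaves))"
    unfolding deg_def using finite_vertex_classes(3) finite_edges by (rule sum_card_incident)
  also have "\<dots> = (\<Sum>e\<in>edges. if e \<in> inner_edges then 0 else 1)"
  proof (rule sum.cong)
    fix e
    assume "e \<in> edges"
    moreover have "finite (e \<inter> leaves)"
      using finite_vertex_classes(3) by simp
    ultimately have "card (e \<inter> leaves) = 0 \<longleftrightarrow> e \<in> inner_edges"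
      by (simp add: inner_edges_def)
    with card_leaves_in_edge[OF \<open>e \<in> edges\<close>]
    show "card (e \<inter> leaves) = (if e \<in> inner_edges then 0 else 1)"
      by auto
  qed simp
  also have "\<dots> = card (edges - inner_edges)"
    using finite_edges by (simp add: sum.If_cases Diff_eq Int_commute)
  also have "\<dots> = card edges - card inner_edges"
    using finite_edges by (intro card_Diff_subset) (auto simp: inner_edges_def intro: finite_subset)
  finally show ?thesis
    using card_mono[OF finite_edges, of inner_edges] by (auto simp: inner_edges_def)
qed

lemma card_branches_le:
  assumes "isolated \<noteq> {}"
  shows "card branches \<le> (\<Sum>v\<in>branches. deg v - 2) + 2 * card inner_edges"
proof -
  have finite_inner: "finite inner_edges"
    using finite_edges by (simp add: inner_edges_def)
  have "card branches \<le> (\<Sum>v\<in>branches. (deg v - 2) + (if v \<in> \<Union>inner_edges then 1 else 0))"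
    unfolding card_eq_sum
  proof (rule sum_mono)
    fix v
    assume "v \<in> branches"
    then show "1 \<le> (deg v - 2) + (if v \<in> \<Union>inner_edges then 1 else 0)"
      using degree_two_branch_on_inner_edge[OF assms] by (fastforce simp: branches_def)
  qed
  also have "\<dots> = (\<Sum>v\<in>branches. deg v - 2) + card (branches \<inter> \<Union>inner_edges)"
    using finite_vertex_classes(4) by (simp add: sum.distrib sum.If_cases Union_eq)
  also have "card (branches \<inter> \<Union>inner_edges) \<le> card (\<Union>inner_edges)"
    using finite_inner finite_edges edge_subset
    by (intro card_mono) (auto simp: inner_edges_def intro: finite_subset)
  also have "\<dots> \<le> (\<Sum>e\<in>inner_edges. card e)"
    by (rule card_Union_le_sum_card)
  also have "\<dots> = 2 * card inner_edges"
    using card_edge by (simp add: inner_edges_def)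
  finally show ?thesis by simp
qed

text \<open>With \<open>sA\<close> the degree sum over \<open>Q1\<close> and \<open>s2\<close> the excess degree sum over the branches,
  the identities above give \<open>3 card Q + 2 card isolated = 2n + card Q1 + card inner_edges + sA + s2\<close>.
  With an isolated vertex, \<open>card_branches_le\<close> yields \<open>n \<le> 1 + 4 (card Q1 + card inner_edges + sA + s2)\<close>,
  so \<open>n \<ge> 6\<close> makes the excess at least two.\<close>

lemma card_lower_bound: "6 \<le> n \<Longrightarrow> 2 * n \<le> 3 * card Q"
  using card_Q card_partition degree_sum card_edges_split card_isolated_le_1
    card_branches_le card_eq_0_iff[of isolated] finite_vertex_classes(2)
  by (cases "card isolated = 0") linarith+

end

lemma beta_H_ge:
  assumes "6 \<le> n"
  shows "2 * n \<le> 3 * beta_H n"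
proof -
  obtain B where "finite B" "resolving_set (H_V n) H_E B" "card B = beta_H n"
    using metric_dim_obtains_basis[OF finite_triple_basis triple_basis_resolving[of 0 n]] assms
    unfolding beta_H_def by auto
  then show ?thesis
    using H_resolving.card_lower_bound[of n B] assms by (simp add: H_resolving_def)
qed

theorem corollary3p1:
  fixes n k :: nat
  assumes "n \<ge> 6" and "n = 3 * k"
  shows "2 * k < beta_H (n + 1) \<and> beta_H (n + 1) < beta_H (n + 2) \<and> beta_H (n + 2) \<le> 2 * (k + 1)"
proof -
  have "beta_H (n + 1) \<le> 1 + 2 * k" "beta_H (n + 2) \<le> 2 + 2 * k"
    using beta_H_le[of k "n + 1"] beta_H_le[of k "n + 2"] assms(2) by simp_all
  moreover have "2 * (n + 1) \<le> 3 * beta_H (n + 1)"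
    by (rule beta_H_ge) (use assms(1) in simp)
  moreover have "2 * (n + 2) \<le> 3 * beta_H (n + 2)"
    by (rule beta_H_ge) (use assms(1) in simp)
  ultimately show ?thesis
    using assms(2) by auto
qed

end
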